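(* Let $G$ be a digraph and $G'$ a subgraph of $G$. Then $\mathrm{sstat}_{\mathtt{vsc}}(G')\le\mathrm{sstat}_{\mathtt{vsc}}(G)$, and $\mathrm{lifo}_{\mathbf{gv}}(G')\le\mathrm{lifo}_{\mathbf{gv}}(G)$ for every $\mathbf{gv}\in\{\mathtt{i},\mathtt{isc},\mathtt{v},\mathtt{vsc},\mathtt{mi},\mathtt{misc},\mathtt{mv},\mathtt{mvsc}\}$.
   Context: All digraphs are finite, simple, without self-loops and have at least one vertex (induced subgraphs appearing as game data may be empty). For a finite set $V$, $V^*$ is the set of finite words over $V$, $\epsilon$ the empty word; $X \preceq Y$ means $X$ is a prefix of $Y$; for $X=a_1\cdots a_n$, $|X|=n$ and $\mathrm{let}(X)=\{a_1,\dots,a_n\}$. $A\Delta B$ is symmetric difference. For $X\subseteq V(G)$, $G\setminus X$ is the subgraph induced by $V(G)\setminus X$. Induced subgraphs are identified with their vertex sets. An initial component of a digraph $H$ is a strongly connected component $C$ with no edge from $H\setminus C$ into $C$. A subgraph $H\subseteq G$ is successor-closed if there is no edge of $G$ from $H$ to $G\setminus H$. LIFO-search game on $G$. A position is a pair $(X,R)$ with $X\in V(G)^*$ and $R$ a (possibly empty) induced subgraph of $G\setminus\mathrm{let}(X)$. It is an $\mathtt{i}$-position if $R$ is successor-closed; an $\mathtt{isc}$-position if $R$ is a union of strongly connected components of $G\setminus\mathrm{let}(X)$; a $\mathtt{v}$-position if $R$ is successor-closed and has a unique initial component; a $\mathtt{vsc}$-position if $R$ is a strongly connected component of $G\setminus\mathrm{let}(X)$.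 For $\mathbf{gv}\in\{\mathtt{i},\mathtt{isc},\mathtt{v},\mathtt{vsc}\}$, a $\mathbf{gv}$-position $(X',R')$ is a $\mathbf{gv}$-successor of $(X,R)$ if ($X\preceq X'$ or $X'\preceq X$), $|\mathrm{let}(X)\Delta\mathrm{let}(X')|=1$, and: for $\mathbf{gv}\in\{\mathtt{i},\mathtt{v}\}$, every $v'\in R'$ is reachable by a directed path in $G\setminus(\mathrm{let}(X)\cap\mathrm{let}(X'))$ from some $v\in R$; for $\mathbf{gv}\in\{\mathtt{isc},\mathtt{vsc}\}$, every $v'\in R'$ lies in the same strongly connected component of $G\setminus(\mathrm{let}(X)\cap\mathrm{let}(X'))$ as some $v\in R$. For $\mathbf{gv}\in\{\mathtt{v},\mathtt{vsc}\}$, if $(\epsilon,G)$ is not a $\mathbf{gv}$-position it is nevertheless admitted as a special position whose $\mathbf{gv}$-successors are exactly the $\mathbf{gv}$-positions of the form $(\epsilon,R)$. A $\mathbf{gv}$-search from $(X_0,R_0)$ is a finite or infinite sequence of $\mathbf{gv}$-positions $(X_0,R_0),(X_1,R_1),\dots$ with each $(X_{i+1},R_{i+1})$ a $\mathbf{gv}$-successor of $(X_i,R_i)$; it is complete if it is infinite or $R_n=\emptyset$ for some $n$, and a complete search is winning for the searchers if $R_n=\emptyset$ for some $n$. A complete search from $(\epsilon,G)$ is monotone if $R_{i+1}\subseteq R_i$ for all $i$; searcher-stationary if $X_i\preceq X_{i+1}$ for all $i$ with $R_i\neq\emptyset$; uses at most $k$ searchers if $|X_i|\le k$ for all $i$.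 A (searcher) $\mathbf{gv}$-strategy is a function $\sigma$ from $\mathbf{gv}$-positions to $V(G)^*$ such that $\sigma(X,R)$ is the first component of some $\mathbf{gv}$-successor of $(X,R)$; a search is consistent with $\sigma$ if $X_{i+1}=\sigma(X_i,R_i)$ for all $i$. $\sigma$ is winning if every complete consistent search from $(\epsilon,G)$ is winning for the searchers; it is monotone / searcher-stationary / uses at most $k$ searchers if every complete consistent search from $(\epsilon,G)$ has that property. $\mathrm{lifo}_{\mathbf{gv}}(G)$ (resp. $\mathrm{lifo}_{\mathtt{m}\mathbf{gv}}(G)$) is the minimum $k$ such that there is a winning (resp. monotone winning) $\mathbf{gv}$-strategy on $G$ using at most $k$ searchers; $\mathrm{sstat}_{\mathtt{vsc}}(G)$ is the minimum $k$ such that there is a searcher-stationary winning $\mathtt{vsc}$-strategy on $G$ using at most $k$ searchers. *)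

theory Defs
  imports Main "HOL-Library.Extended_Nat" "HOL-Library.Sublist"
begin

text \<open>A digraph is given by a finite nonempty vertex set V and an edge set E \<subseteq> V \<times> V
  without self-loops. Induced subgraphs are identified with their vertex sets.\<close>

definition digraph :: "'a set \<Rightarrow> ('a \<times> 'a) set \<Rightarrow> bool" where
  "digraph V E \<longleftrightarrow> finite V \<and> V \<noteq> {} \<and> E \<subseteq> V \<times> V \<and> (\<forall>v. (v, v) \<notin> E)"

definition subgraph :: "'a set \<Rightarrow> ('a \<times> 'a) set \<Rightarrow> 'a set \<Rightarrow> ('a \<times> 'a) set \<Rightarrow> bool" where
  "subgraph V' E' V E \<longleftrightarrow> digraph V' E' \<and> digraph V E \<and> V' \<subseteq> V \<and> E' \<subseteq> E"

definition reach_in :: "('a \<times> 'a) set \<Rightarrow> 'a set \<Rightarrow> 'a \<Rightarrow> 'a \<Rightarrow> bool" where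
  "reach_in E W u v \<longleftrightarrow> u \<in> W \<and> v \<in> W \<and> (u, v) \<in> (E \<inter> (W \<times> W))\<^sup>*"

definition same_scc :: "('a \<times> 'a) set \<Rightarrow> 'a set \<Rightarrow> 'a \<Rightarrow> 'a \<Rightarrow> bool" where
  "same_scc E W u v \<longleftrightarrow> reach_in E W u v \<and> reach_in E W v u"

definition is_scc :: "('a \<times> 'a) set \<Rightarrow> 'a set \<Rightarrow> 'a set \<Rightarrow> bool" where
  "is_scc E W C \<longleftrightarrow> (\<exists>u\<in>W. C = {v. same_scc E W u v})"

definition succ_closed :: "('a \<times> 'a) set \<Rightarrow> 'a set \<Rightarrow> 'a set \<Rightarrow> bool" where
  "succ_closed E W R \<longleftrightarrow> R \<subseteq> W \<and> \<not> (\<exists>u v. (u, v) \<in> E \<and> u \<in> R \<and> v \<in> W - R)"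

definition initial_comp :: "('a \<times> 'a) set \<Rightarrow> 'a set \<Rightarrow> 'a set \<Rightarrow> bool" where
  "initial_comp E R C \<longleftrightarrow> is_scc E R C \<and> \<not> (\<exists>u v. (u, v) \<in> E \<and> u \<in> R - C \<and> v \<in> C)"

datatype gvar = GI | GISC | GV | GVSC

definition is_pos :: "gvar \<Rightarrow> 'a set \<Rightarrow> ('a \<times> 'a) set \<Rightarrow> 'a list \<Rightarrow> 'a set \<Rightarrow> bool" where
  "is_pos g V E X R \<longleftrightarrow> set X \<subseteq> V \<and> R \<subseteq> V - set X \<and>
     (case g of
        GI \<Rightarrow> succ_closed E (V - set X) R
      | GISC \<Rightarrow> (\<forall>v\<in>R. {u. same_scc E (V - set X) v u} \<subseteq> R)
      | GV \<Rightarrow> succ_closed E (V - set X) R \<and> (R = {} \<or> (\<exists>!C. initial_comp E R C))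
      | GVSC \<Rightarrow> R = {} \<or> is_scc E (V - set X) R)"

definition special :: "gvar \<Rightarrow> 'a set \<Rightarrow> ('a \<times> 'a) set \<Rightarrow> 'a list \<Rightarrow> 'a set \<Rightarrow> bool" where
  "special g V E X R \<longleftrightarrow> g \<in> {GV, GVSC} \<and> X = [] \<and> R = V \<and> \<not> is_pos g V E [] V"

definition admissible :: "gvar \<Rightarrow> 'a set \<Rightarrow> ('a \<times> 'a) set \<Rightarrow> 'a list \<Rightarrow> 'a set \<Rightarrow> bool" where
  "admissible g V E X R \<longleftrightarrow> is_pos g V E X R \<or> special g V E X R"

definition is_succ :: "gvar \<Rightarrow> 'a set \<Rightarrow> ('a \<times> 'a) set \<Rightarrow> 'a list \<times> 'a set \<Rightarrow> 'a list \<times> 'a set \<Rightarrow> bool" where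
  "is_succ g V E p p' \<longleftrightarrow>
     (let (X, R) = p; (X', R') = p' in
      if special g V E X R then X' = [] \<and> is_pos g V E [] R'
      else is_pos g V E X' R' \<and> (prefix X X' \<or> prefix X' X) \<and>
           card ((set X - set X') \<union> (set X' - set X)) = 1 \<and>
           (if g \<in> {GI, GV}
            then (\<forall>v'\<in>R'. \<exists>v\<in>R. reach_in E (V - (set X \<inter> set X')) v v')
            else (\<forall>v'\<in>R'. \<exists>v\<in>R. same_scc E (V - (set X \<inter> set X')) v v')))"

definition strategy :: "gvar \<Rightarrow> 'a set \<Rightarrow> ('a \<times> 'a) set \<Rightarrow> ('a list \<times> 'a set \<Rightarrow> 'a list) \<Rightarrow> bool" where
  "strategy g V E \<sigma> \<longleftrightarrow>
     (\<forall>X R. admissible g V E X R \<longrightarrow> (\<exists>R'. is_succ g V E (X, R) (\<sigma> (X, R), R')))"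

text \<open>A gv-search from (\<epsilon>,G) consistent with \<sigma>, of length N (N = \<infinity> for infinite searches):
  positions s 0, s 1, ..., s i for enat i < N.\<close>
definition cons_search :: "gvar \<Rightarrow> 'a set \<Rightarrow> ('a \<times> 'a) set \<Rightarrow> ('a list \<times> 'a set \<Rightarrow> 'a list)
    \<Rightarrow> (nat \<Rightarrow> 'a list \<times> 'a set) \<Rightarrow> enat \<Rightarrow> bool" where
  "cons_search g V E \<sigma> s N \<longleftrightarrow> N \<ge> 1 \<and> s 0 = ([], V) \<and>
     (\<forall>i. enat (Suc i) < N \<longrightarrow> is_succ g V E (s i) (s (Suc i)) \<and> fst (s (Suc i)) = \<sigma> (s i))"

definition complete :: "(nat \<Rightarrow> 'a list \<times> 'a set) \<Rightarrow> enat \<Rightarrow> bool" where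
  "complete s N \<longleftrightarrow> N = \<infinity> \<or> (\<exists>i. enat i < N \<and> snd (s i) = {})"

definition winning_search :: "(nat \<Rightarrow> 'a list \<times> 'a set) \<Rightarrow> enat \<Rightarrow> bool" where
  "winning_search s N \<longleftrightarrow> (\<exists>i. enat i < N \<and> snd (s i) = {})"

definition monotone_search :: "(nat \<Rightarrow> 'a list \<times> 'a set) \<Rightarrow> enat \<Rightarrow> bool" where
  "monotone_search s N \<longleftrightarrow> (\<forall>i. enat (Suc i) < N \<longrightarrow> snd (s (Suc i)) \<subseteq> snd (s i))"

definition stationary_search :: "(nat \<Rightarrow> 'a list \<times> 'a set) \<Rightarrow> enat \<Rightarrow> bool" where
  "stationary_search s N \<longleftrightarrow>
     (\<forall>i. enat (Suc i) < N \<longrightarrow> snd (s i) \<noteq> {} \<longrightarrow> prefix (fst (s i)) (fst (s (Suc i))))"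

definition bounded_search :: "nat \<Rightarrow> (nat \<Rightarrow> 'a list \<times> 'a set) \<Rightarrow> enat \<Rightarrow> bool" where
  "bounded_search k s N \<longleftrightarrow> (\<forall>i. enat i < N \<longrightarrow> length (fst (s i)) \<le> k)"

definition all_complete :: "gvar \<Rightarrow> 'a set \<Rightarrow> ('a \<times> 'a) set \<Rightarrow> ('a list \<times> 'a set \<Rightarrow> 'a list)
    \<Rightarrow> ((nat \<Rightarrow> 'a list \<times> 'a set) \<Rightarrow> enat \<Rightarrow> bool) \<Rightarrow> bool" where
  "all_complete g V E \<sigma> P \<longleftrightarrow> (\<forall>s N. cons_search g V E \<sigma> s N \<and> complete s N \<longrightarrow> P s N)"

definition lifo :: "gvar \<Rightarrow> 'a set \<Rightarrow> ('a \<times> 'a) set \<Rightarrow> enat" where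
  "lifo g V E = Inf {enat k | k. \<exists>\<sigma>. strategy g V E \<sigma> \<and> all_complete g V E \<sigma> winning_search
       \<and> all_complete g V E \<sigma> (bounded_search k)}"

definition mlifo :: "gvar \<Rightarrow> 'a set \<Rightarrow> ('a \<times> 'a) set \<Rightarrow> enat" where
  "mlifo g V E = Inf {enat k | k. \<exists>\<sigma>. strategy g V E \<sigma> \<and> all_complete g V E \<sigma> winning_search
       \<and> all_complete g V E \<sigma> monotone_search \<and> all_complete g V E \<sigma> (bounded_search k)}"

definition sstat_vsc :: "'a set \<Rightarrow> ('a \<times> 'a) set \<Rightarrow> enat" where
  "sstat_vsc V E = Inf {enat k | k. \<exists>\<sigma>. strategy GVSC V E \<sigma> \<and> all_complete GVSC V E \<sigma> winning_search
       \<and> all_complete GVSC V E \<sigma> stationary_search \<and> all_complete GVSC V E \<sigma> (bounded_search k)}"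

end

theory Submission
  imports Defs
begin

text \<open>A winning strategy on G with k searchers is simulated on the subgraph G'. A position of
  the game on G' is shadowed by a position reachable under the strategy on G whose searchers on
  G' stand where those of G' stand, placed in the same order, and whose robber space contains the
  G'-space. Moves of the strategy off G' are invisible in G', and the robber in G answers them with
  the closure of her G'-space; moves on G' are copied to G'. Only finitely many positions are
  reachable under a bounded strategy, and the strategy always wins, so reachable positions have a
  height that decreases strictly along every move before capture. Taking lifts of minimal height,
  the height drops in every round, hence the copied strategy wins on G'. It uses no more
  searchers, and it inherits monotonicity and searcher-stationarity from the original.\<close>

section \<open>Reachability in induced subgraphs\<close>

lemma reach_in_refl: "u \<in> W \<Longrightarrow> reach_in E W u u"
  by (simp add: reach_in_def)

lemma reach_in_mem: "reach_in E W u v \<Longrightarrow> u \<in> W \<and> v \<in> W"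
  by (simp add: reach_in_def)

lemma reach_in_trans: "reach_in E W u v \<Longrightarrow> reach_in E W v w \<Longrightarrow> reach_in E W u w"
  unfolding reach_in_def by auto

lemma reach_in_edge: "(u, v) \<in> E \<Longrightarrow> u \<in> W \<Longrightarrow> v \<in> W \<Longrightarrow> reach_in E W u v"
  unfolding reach_in_def by auto

lemma reach_in_mono:
  assumes "reach_in E W u v" "E \<subseteq> E2" "W \<subseteq> W2"
  shows "reach_in E2 W2 u v"
proof -
  have "E \<inter> W \<times> W \<subseteq> E2 \<inter> W2 \<times> W2" using assms by auto
  then show ?thesis using assms unfolding reach_in_def using rtrancl_mono by blast
qed

lemma reach_in_closed:
  assumes "succ_closed E W R" "u \<in> R" "reach_in E W u v"
  shows "v \<in> R"
proof -
  have "(u, v) \<in> (E \<inter> W \<times> W)\<^sup>*" using assms(3) by (simp add: reach_in_def)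
  then show ?thesis
    by induction (use assms(1,2) in \<open>auto simp: succ_closed_def\<close>)
qed

lemma reach_in_restrict_to_reachable:
  assumes "reach_in E W w x"
  shows "reach_in E {y. reach_in E W w y} w x"
proof -
  let ?W = "{y. reach_in E W w y}"
  have wW: "w \<in> W" using assms by (simp add: reach_in_def)
  have "(w, x) \<in> (E \<inter> W \<times> W)\<^sup>*" using assms by (simp add: reach_in_def)
  then have "(w, x) \<in> (E \<inter> ?W \<times> ?W)\<^sup>*"
  proof induction
    case (step y z)
    have e: "(y, z) \<in> E" "y \<in> W" "z \<in> W" using step.hyps(2) by auto
    have wy: "reach_in E W w y" using step.hyps(1) wW e(2) by (simp add: reach_in_def)
    have "reach_in E W w z" using reach_in_trans[OF wy reach_in_edge[OF e]] .
    with e wy have "(y, z) \<in> E \<inter> ?W \<times> ?W" by simp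
    with step.IH show ?case by (rule rtrancl_into_rtrancl)
  qed simp
  then show ?thesis using assms wW by (simp add: reach_in_def reach_in_refl)
qed

lemma reach_in_through:
  assumes "reach_in E W u v" "\<not> reach_in E (W - {a}) u v"
  shows "reach_in E W u a \<and> reach_in E W a v"
proof -
  have uW: "u \<in> W" using assms(1) by (simp add: reach_in_def)
  have "(u, v) \<in> (E \<inter> W \<times> W)\<^sup>*" using assms(1) by (simp add: reach_in_def)
  then have "\<not> reach_in E (W - {a}) u v \<longrightarrow> reach_in E W u a \<and> reach_in E W a v"
  proof induction
    case base
    then show ?case using uW by (auto simp: reach_in_def)
  next
    case (step y z)
    have e: "(y, z) \<in> E" "y \<in> W" "z \<in> W" using step.hyps(2) by auto
    have uy: "reach_in E W u y" using step.hyps(1) uW e(2) by (simp add: reach_in_def)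
    show ?case
    proof
      assume nz: "\<not> reach_in E (W - {a}) u z"
      show "reach_in E W u a \<and> reach_in E W a z"
      proof (cases "reach_in E (W - {a}) u y")
        case True
        have "z = a"
        proof (rule ccontr)
          assume "z \<noteq> a"
          then have "reach_in E (W - {a}) y z"
            using reach_in_mem[OF True] e by (simp add: reach_in_edge)
          then show False using reach_in_trans[OF True] nz by blast
        qed
        then show ?thesis using reach_in_trans[OF uy reach_in_edge[OF e]] reach_in_refl e by simp
      next
        case False
        then have ua: "reach_in E W u a" and ay: "reach_in E W a y" using step.IH by auto
        show ?thesis using ua reach_in_trans[OF ay reach_in_edge[OF e]] by simp
      qed
    qed
  qed
  then show ?thesis using assms(2) by blast
qed

lemma same_scc_refl: "u \<in> W \<Longrightarrow> same_scc E W u u"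
  by (simp add: same_scc_def reach_in_refl)

lemma same_scc_sym: "same_scc E W u v \<Longrightarrow> same_scc E W v u"
  unfolding same_scc_def by auto

lemma same_scc_trans: "same_scc E W u v \<Longrightarrow> same_scc E W v w \<Longrightarrow> same_scc E W u w"
  unfolding same_scc_def using reach_in_trans[of E W u v w] reach_in_trans[of E W w v u] by blast

lemma same_scc_mono: "same_scc E W u v \<Longrightarrow> E \<subseteq> E2 \<Longrightarrow> W \<subseteq> W2 \<Longrightarrow> same_scc E2 W2 u v"
  unfolding same_scc_def using reach_in_mono[of E W u v] reach_in_mono[of E W v u] by blast

lemma same_scc_mem: "same_scc E W u v \<Longrightarrow> u \<in> W \<and> v \<in> W"
  unfolding same_scc_def using reach_in_mem[of E W u v] by blast

lemma same_scc_through: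
  assumes "same_scc E W u v" "\<not> same_scc E (W - {a}) u v"
  shows "same_scc E W u a"
proof -
  have uv: "reach_in E W u v" and vu: "reach_in E W v u"
    using assms(1) by (auto simp: same_scc_def)
  have "reach_in E W u a \<and> reach_in E W a u"
  proof (cases "reach_in E (W - {a}) u v")
    case True
    then have "\<not> reach_in E (W - {a}) v u" using assms(2) by (simp add: same_scc_def)
    then have va: "reach_in E W v a" and au: "reach_in E W a u" using reach_in_through[OF vu] by auto
    show ?thesis using reach_in_trans[OF uv va] au by simp
  next
    case False
    then have ua: "reach_in E W u a" and av: "reach_in E W a v" using reach_in_through[OF uv] by auto
    show ?thesis using ua reach_in_trans[OF av vu] by simp
  qed
  then show ?thesis by (simp add: same_scc_def)
qed

text \<open>The robber's moves in variant g (cf. is_succ): along paths for i and v, within strongly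
  connected components for isc and vsc.\<close>
definition connects :: "gvar \<Rightarrow> ('a \<times> 'a) set \<Rightarrow> 'a set \<Rightarrow> 'a \<Rightarrow> 'a \<Rightarrow> bool" where
  "connects g E W u v \<longleftrightarrow> (if g \<in> {GI, GV} then reach_in E W u v else same_scc E W u v)"

lemma connects_refl: "u \<in> W \<Longrightarrow> connects g E W u u"
  by (simp add: connects_def reach_in_refl same_scc_refl)

lemma connects_trans: "connects g E W u v \<Longrightarrow> connects g E W v w \<Longrightarrow> connects g E W u w"
  unfolding connects_def using reach_in_trans[of E W u v w] same_scc_trans[of E W u v w]
  by (auto split: if_split_asm)

lemma connects_mono: "connects g E W u v \<Longrightarrow> E \<subseteq> E2 \<Longrightarrow> W \<subseteq> W2 \<Longrightarrow> connects g E2 W2 u v"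
  unfolding connects_def using reach_in_mono[of E W u v E2 W2] same_scc_mono[of E W u v E2 W2]
  by (auto split: if_split_asm)

lemma connects_mem: "connects g E W u v \<Longrightarrow> u \<in> W \<and> v \<in> W"
  unfolding connects_def using reach_in_mem[of E W u v] same_scc_mem[of E W u v]
  by (auto split: if_split_asm)

lemma connects_through:
  "connects g E W u v \<Longrightarrow> \<not> connects g E (W - {a}) u v \<Longrightarrow> connects g E W u a"
  unfolding connects_def using reach_in_through[of E W u v a] same_scc_through[of E W u v a]
  by (auto split: if_split_asm)

definition connected_set :: "gvar \<Rightarrow> ('a \<times> 'a) set \<Rightarrow> 'a set \<Rightarrow> 'a set \<Rightarrow> 'a set" where
  "connected_set g E W R = {v. \<exists>u\<in>R. connects g E W u v}"

lemma connected_set_subset: "connected_set g E W R \<subseteq> W"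
  unfolding connected_set_def by (auto dest: connects_mem)

lemma subset_connected_set: "R \<subseteq> W \<Longrightarrow> R \<subseteq> connected_set g E W R"
  unfolding connected_set_def by (auto intro: connects_refl)

definition is_root :: "('a \<times> 'a) set \<Rightarrow> 'a set \<Rightarrow> 'a \<Rightarrow> bool" where
  "is_root E R r \<longleftrightarrow> r \<in> R \<and> (\<forall>v\<in>R. reach_in E R r v)"

lemma reach_in_into_scc:
  assumes "(y, z) \<in> E" "y \<in> R" "same_scc E R x z"
  shows "reach_in E R y x"
proof -
  have "reach_in E R y z" using assms same_scc_mem reach_in_edge by metis
  moreover have "reach_in E R z x" using assms(3) by (simp add: same_scc_def)
  ultimately show ?thesis by (rule reach_in_trans)
qed

lemma unique_initial_comp_if_root:
  assumes "is_root E R r"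
  shows "\<exists>!C. initial_comp E R C"
proof -
  let ?C = "{x. same_scc E R r x}"
  have rR: "r \<in> R" and rt: "\<And>v. v \<in> R \<Longrightarrow> reach_in E R r v"
    using assms by (auto simp: is_root_def)
  have "initial_comp E R ?C"
    unfolding initial_comp_def is_scc_def
  proof (intro conjI notI)
    show "\<exists>u\<in>R. ?C = {v. same_scc E R u v}" using rR by blast
    assume "\<exists>u v. (u, v) \<in> E \<and> u \<in> R - ?C \<and> v \<in> ?C"
    then obtain y z where yz: "(y, z) \<in> E" "y \<in> R" "y \<notin> ?C" "same_scc E R r z" by blast
    then have "reach_in E R y r" by (intro reach_in_into_scc)
    with rt[OF yz(2)] yz(3) show False by (simp add: same_scc_def)
  qed
  moreover have "D = ?C" if D: "initial_comp E R D" for D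
  proof -
    obtain d where dR: "d \<in> R" and Dd: "D = {v. same_scc E R d v}"
      using D by (auto simp: initial_comp_def is_scc_def)
    have no_entry: "\<not> (\<exists>u v. (u, v) \<in> E \<and> u \<in> R - D \<and> v \<in> D)"
      using D by (simp add: initial_comp_def)
    have "(r, d) \<in> (E \<inter> R \<times> R)\<^sup>*" using rt[OF dR] by (simp add: reach_in_def)
    moreover have "d \<in> D" using Dd dR same_scc_refl by fast
    ultimately have "r \<in> D"
      by (induction rule: converse_rtrancl_induct) (use no_entry in blast)+
    then have "same_scc E R d r" using Dd by simp
    then show "D = ?C"
      using Dd same_scc_trans[OF same_scc_sym] same_scc_trans by auto
  qed
  ultimately show ?thesis by blast
qed

text \<open>An ancestor of v with a minimal set of ancestors lies in an initial component.\<close>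
lemma initial_comp_reaching:
  assumes fin: "finite R" and vR: "v \<in> R"
  shows "\<exists>x D. initial_comp E R D \<and> x \<in> D \<and> reach_in E R x v"
proof -
  let ?anc = "\<lambda>x. {y. reach_in E R y x}"
  let ?P = "\<lambda>x. reach_in E R x v"
  define x where "x = arg_min (\<lambda>x. card (?anc x)) ?P"
  have Pv: "?P v" using vR by (rule reach_in_refl)
  have Px: "?P x" unfolding x_def by (rule arg_min_natI[of ?P, OF Pv])
  have xR: "x \<in> R" using reach_in_mem[OF Px] ..
  have min: "\<And>y. ?P y \<Longrightarrow> card (?anc x) \<le> card (?anc y)"
    unfolding x_def by (rule arg_min_nat_le)
  let ?D = "{y. same_scc E R x y}"
  have "initial_comp E R ?D"
    unfolding initial_comp_def is_scc_def
  proof (intro conjI notI)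
    show "\<exists>u\<in>R. ?D = {v. same_scc E R u v}" using xR by blast
    assume "\<exists>u v. (u, v) \<in> E \<and> u \<in> R - ?D \<and> v \<in> ?D"
    then obtain y z where yz: "(y, z) \<in> E" "y \<in> R" "y \<notin> ?D" "same_scc E R x z" by blast
    have yx: "reach_in E R y x" using yz(1,2,4) by (rule reach_in_into_scc)
    have "?anc y \<subseteq> ?anc x" using reach_in_trans[OF _ yx] by auto
    moreover have "x \<in> ?anc x" using xR by (simp add: reach_in_refl)
    moreover have "x \<notin> ?anc y" using yx yz(3) by (simp add: same_scc_def)
    moreover have "finite (?anc x)"
      using fin by (rule rev_finite_subset) (auto dest: reach_in_mem)
    ultimately have "card (?anc y) < card (?anc x)" by (metis psubsetI psubset_card_mono)
    moreover have "?P y" using reach_in_trans[OF yx Px] .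
    ultimately show False using min[of y] by simp
  qed
  moreover have "x \<in> ?D" using xR by (simp add: same_scc_refl)
  ultimately show ?thesis using Px by blast
qed

lemma root_if_unique_initial_comp:
  assumes fin: "finite R" and ne: "R \<noteq> {}" and uniq: "\<exists>!C. initial_comp E R C"
  shows "\<exists>r. is_root E R r"
proof -
  obtain C where C: "initial_comp E R C" using uniq by blast
  obtain c where cR: "c \<in> R" and Cc: "C = {v. same_scc E R c v}"
    using C by (auto simp: initial_comp_def is_scc_def)
  have "reach_in E R c v" if vR: "v \<in> R" for v
  proof -
    obtain x D where D: "initial_comp E R D" "x \<in> D" and xv: "reach_in E R x v"
      using initial_comp_reaching[OF fin vR] by blast
    have "D = C" using uniq C D by blast
    then have "reach_in E R c x" using D(2) Cc by (simp add: same_scc_def)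
    then show ?thesis using xv by (rule reach_in_trans)
  qed
  then show ?thesis using cR by (auto simp: is_root_def)
qed

section \<open>The searchers' lists\<close>

definition searcher_step :: "'a list \<Rightarrow> 'a list \<Rightarrow> bool" where
  "searcher_step X X' \<longleftrightarrow>
     (prefix X X' \<or> prefix X' X) \<and> card ((set X - set X') \<union> (set X' - set X)) = 1"

lemma searcher_step_sym: "searcher_step X X' \<longleftrightarrow> searcher_step X' X"
  unfolding searcher_step_def by (simp add: Un_commute disj_commute)

lemma searcher_step_iff:
  "searcher_step X X' \<longleftrightarrow>
     (\<exists>a. a \<notin> set X \<and> set X' = insert a (set X) \<and> prefix X X') \<or>
     (\<exists>a. a \<notin> set X' \<and> set X = insert a (set X') \<and> prefix X' X)"
proof -
  have add: "card ((set X - set X') \<union> (set X' - set X)) = 1 \<longleftrightarrow>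
      (\<exists>a. a \<notin> set X \<and> set X' = insert a (set X))"
    if "prefix X X'" for X X' :: "'a list"
  proof -
    have "set X \<subseteq> set X'" using that set_mono_prefix by blast
    then have "(set X - set X') \<union> (set X' - set X) = set X' - set X" by blast
    then show ?thesis by (auto simp: card_1_singleton_iff)
  qed
  show ?thesis
    unfolding searcher_step_def
    using add[of X X'] add[of X' X] by (auto simp: Un_commute)
qed

lemma searcher_step_Nil: "searcher_step [] X \<Longrightarrow> X \<noteq> []"
  by (auto simp: searcher_step_def)

lemma searcher_step_take: "X \<noteq> [] \<Longrightarrow> \<exists>n. searcher_step X (take n X)"
proof (induction X rule: rev_induct)
  case (snoc x xs)
  show ?case
  proof (cases "x \<in> set xs")
    case False
    then have "searcher_step (xs @ [x]) (take (length xs) (xs @ [x]))"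
      by (auto simp: searcher_step_iff)
    then show ?thesis by blast
  next
    case True
    then obtain n where n: "searcher_step xs (take n xs)" using snoc.IH by fastforce
    moreover have "\<not> searcher_step xs xs" by (simp add: searcher_step_def)
    ultimately have "take n xs \<noteq> xs" by metis
    then have "n < length xs" by (metis not_less take_all)
    then have "\<not> prefix xs (take n xs)" by (auto dest: prefix_length_le)
    then obtain a where a: "a \<notin> set (take n xs)" "set xs = insert a (set (take n xs))"
      using n by (auto simp: searcher_step_iff)
    have "prefix (take n xs) (xs @ [x])" by (metis prefix_append take_is_prefix)
    then have "searcher_step (xs @ [x]) (take n xs)"
      unfolding searcher_step_iff using a True by (auto simp: insert_absorb)
    moreover have "take n (xs @ [x]) = take n xs" using \<open>n < length xs\<close> by simp
    ultimately have "searcher_step (xs @ [x]) (take n (xs @ [x]))" by simp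
    then show ?thesis by blast
  qed
qed simp

text \<open>The vertices of A in the order in which they first occur in xs.\<close>
definition first_visits :: "'a set \<Rightarrow> 'a list \<Rightarrow> 'a list" where
  "first_visits A xs = filter (\<lambda>v. v \<in> A) (rev (remdups (rev xs)))"

lemma first_visits_Nil[simp]: "first_visits A [] = []"
  by (simp add: first_visits_def)

lemma set_first_visits[simp]: "set (first_visits A xs) = set xs \<inter> A"
  by (auto simp: first_visits_def)

lemma length_first_visits: "length (first_visits A xs) \<le> length xs"
  unfolding first_visits_def
  by (metis length_filter_le length_remdups_leq length_rev order_trans)

lemma remdups_append_filter:
  "remdups (xs @ ys) = filter (\<lambda>x. x \<notin> set ys) (remdups xs) @ remdups ys"
  by (induction xs) auto

lemma first_visits_append:
  "first_visits A (xs @ ys) = first_visits A xs @ first_visits A (filter (\<lambda>y. y \<notin> set xs) ys)"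
  by (simp add: first_visits_def remdups_append_filter remdups_filter rev_filter)

lemma prefix_first_visits: "prefix xs ys \<Longrightarrow> prefix (first_visits A xs) (first_visits A ys)"
  by (auto simp: prefix_def first_visits_append)

lemma first_visits_add:
  assumes "prefix xs ys" "a \<notin> set xs" "set ys = insert a (set xs)"
  shows "first_visits A ys = first_visits A xs @ (if a \<in> A then [a] else [])"
proof -
  obtain zs where ys: "ys = xs @ zs" using assms(1) by (auto simp: prefix_def)
  let ?zs = "filter (\<lambda>y. y \<notin> set xs) zs"
  have "set ?zs = {a}" using assms(2,3) ys by auto
  moreover have "ws = [a]" if "distinct ws" "set ws = {a}" for ws :: "'a list"
  proof -
    have "length ws = Suc 0" using distinct_card[OF that(1)] that(2) by simp
    then obtain b where "ws = [b]" by (auto simp: length_Suc_conv)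
    then show ?thesis using that(2) by simp
  qed
  ultimately have "rev (remdups (rev ?zs)) = [a]" by simp
  then have "first_visits A ?zs = (if a \<in> A then [a] else [])"
    by (simp only: first_visits_def) simp
  then show ?thesis by (simp only: ys first_visits_append)
qed

lemma first_visits_searcher_step:
  assumes "searcher_step X X'"
  shows "if set X' \<inter> A = set X \<inter> A then first_visits A X' = first_visits A X
         else searcher_step (first_visits A X) (first_visits A X')"
proof -
  have add: "if set X' \<inter> A = set X \<inter> A then first_visits A X' = first_visits A X
         else searcher_step (first_visits A X) (first_visits A X')"
    if a: "a \<notin> set X" "set X' = insert a (set X)" "prefix X X'" for X X' a
  proof -
    have fv: "first_visits A X' = first_visits A X @ (if a \<in> A then [a] else [])"
      using first_visits_add[OF a(3,1,2)] .
    show ?thesis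
    proof (cases "a \<in> A")
      case True
      then have "searcher_step (first_visits A X) (first_visits A X')"
        unfolding searcher_step_iff using a fv by auto
      then show ?thesis using True a by auto
    qed (use a fv in auto)
  qed
  from assms consider
      (place) a where "a \<notin> set X" "set X' = insert a (set X)" "prefix X X'"
    | (remove) a where "a \<notin> set X'" "set X = insert a (set X')" "prefix X' X"
    unfolding searcher_step_iff by blast
  then show ?thesis
  proof cases
    case place
    then show ?thesis by (rule add)
  next
    case remove
    then show ?thesis using add[OF remove] searcher_step_sym by (auto split: if_splits)
  qed
qed

section \<open>Positions and moves\<close>

lemma is_pos_subset: "is_pos g V E X R \<Longrightarrow> set X \<subseteq> V \<and> R \<subseteq> V - set X"
  by (simp add: is_pos_def)

lemma is_pos_empty: "set X \<subseteq> V \<Longrightarrow> is_pos g V E X {}"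
  by (cases g) (simp_all add: is_pos_def succ_closed_def)

lemma special_start: "special g V E X R \<Longrightarrow> X = [] \<and> R = V \<and> V \<noteq> {}"
  using is_pos_empty[of "[]" "{}" g E] by (auto simp: special_def)

lemma is_pos_not_special: "is_pos g V E X R \<Longrightarrow> \<not> special g V E X R"
  by (auto simp: special_def)

lemma admissible_start: "admissible g V E [] V"
proof (cases "g \<in> {GV, GVSC}")
  case False
  then have "g = GI \<or> g = GISC" by (cases g) auto
  moreover have "{u. same_scc E V v u} \<subseteq> V" for v using same_scc_mem by fast
  ultimately have "is_pos g V E [] V" by (auto simp: is_pos_def succ_closed_def)
  then show ?thesis by (simp add: admissible_def)
qed (auto simp: admissible_def special_def)

lemma admissible_subset:
  assumes "admissible g V E X R"
  shows "set X \<subseteq> V \<and> R \<subseteq> V"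
proof (cases "special g V E X R")
  case True
  then show ?thesis using special_start[OF True] by simp
next
  case False
  then show ?thesis using assms is_pos_subset[of g V E X R] by (auto simp: admissible_def)
qed

lemma connects_closed:
  assumes pos: "is_pos g V E X R" and "w \<in> R" and "connects g E (V - set X) w v"
  shows "v \<in> R"
proof (cases g)
  case GVSC
  with pos assms(2) obtain u where u: "R = {x. same_scc E (V - set X) u x}"
    by (auto simp: is_pos_def is_scc_def)
  moreover have "same_scc E (V - set X) u w" using u assms(2) by simp
  ultimately show ?thesis
    using assms(3) GVSC same_scc_trans[of E "V - set X" u w v] by (simp add: connects_def)
qed (use assms reach_in_closed in \<open>auto simp: is_pos_def connects_def\<close>)

lemma connected_set_connects:
  assumes "v \<in> connected_set g E W R" "R \<subseteq> R2" "E \<subseteq> E2" "W \<subseteq> W2"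
  shows "\<exists>u\<in>R2. connects g E2 W2 u v"
proof -
  obtain u where "u \<in> R" "connects g E W u v" using assms(1) by (auto simp: connected_set_def)
  then show ?thesis using assms(2-4) connects_mono[of g E W u v E2 W2] by blast
qed

lemma connected_set_empty[simp]: "connected_set g E W {} = {}"
  by (simp add: connected_set_def)

lemma succ_closed_connected_set:
  assumes "g \<in> {GI, GV}"
  shows "succ_closed E W (connected_set g E W R)"
  unfolding succ_closed_def
proof (intro conjI notI)
  show "connected_set g E W R \<subseteq> W" by (rule connected_set_subset)
  assume "\<exists>u v. (u, v) \<in> E \<and> u \<in> connected_set g E W R \<and> v \<in> W - connected_set g E W R"
  then obtain u v w where uv: "(u, v) \<in> E" "v \<in> W" "v \<notin> connected_set g E W R"
    and w: "w \<in> R" "reach_in E W w u"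
    using assms by (auto simp: connected_set_def connects_def)
  have "reach_in E W u v" using uv reach_in_mem[OF w(2)] by (simp add: reach_in_edge)
  with w(2) have "reach_in E W w v" by (rule reach_in_trans)
  then show False using uv(3) w(1) assms by (auto simp: connected_set_def connects_def)
qed

lemma same_scc_closed_connected_set:
  assumes "g \<notin> {GI, GV}"
  shows "\<forall>v\<in>connected_set g E W R. {u. same_scc E W v u} \<subseteq> connected_set g E W R"
proof (intro ballI subsetI)
  fix v u assume "v \<in> connected_set g E W R" "u \<in> {u. same_scc E W v u}"
  moreover from this(1) obtain w where "w \<in> R" "same_scc E W w v"
    using assms by (auto simp: connected_set_def connects_def)
  ultimately show "u \<in> connected_set g E W R"
    using assms same_scc_trans[of E W w v u] by (auto simp: connected_set_def connects_def)
qed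

lemma root_connected_set:
  assumes g: "g \<in> {GI, GV}" and r: "is_root E1 R r" and "E1 \<subseteq> E" "R \<subseteq> W"
  shows "is_root E (connected_set g E W R) r"
  unfolding is_root_def
proof (intro conjI ballI)
  let ?C = "connected_set g E W R"
  have RC: "R \<subseteq> ?C" using assms(4) by (rule subset_connected_set)
  then show "r \<in> ?C" using r by (auto simp: is_root_def)
  fix v assume "v \<in> ?C"
  then obtain w where w: "w \<in> R" "reach_in E W w v"
    using g by (auto simp: connected_set_def connects_def)
  have "reach_in E1 R r w" using r w(1) by (simp add: is_root_def)
  then have rw: "reach_in E ?C r w" using assms(3) RC by (rule reach_in_mono)
  have "{y. reach_in E W w y} \<subseteq> ?C" using w(1) g by (auto simp: connected_set_def connects_def)
  then have "reach_in E ?C w v"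
    using reach_in_mono[OF reach_in_restrict_to_reachable[OF w(2)] order_refl] by blast
  with rw show "reach_in E ?C r v" by (rule reach_in_trans)
qed

lemma unique_initial_comp_connected_set:
  assumes "g \<in> {GI, GV}" "E1 \<subseteq> E" "finite R" "R \<noteq> {}" "R \<subseteq> W"
    and "\<exists>!C. initial_comp E1 R C"
  shows "\<exists>!C. initial_comp E (connected_set g E W R) C"
proof -
  obtain r where "is_root E1 R r" using root_if_unique_initial_comp assms(3,4,6) by metis
  then have "is_root E (connected_set g E W R) r" by (rule root_connected_set[OF assms(1) _ assms(2,5)])
  then show ?thesis by (rule unique_initial_comp_if_root)
qed

lemma scc_connected_set:
  assumes g: "g \<notin> {GI, GV}" and C: "is_scc E1 W1 C" and "E1 \<subseteq> E" "W1 \<subseteq> W"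
  shows "is_scc E W (connected_set g E W C)"
proof -
  obtain u where u: "u \<in> W1" "C = {x. same_scc E1 W1 u x}" using C by (auto simp: is_scc_def)
  have "connected_set g E W C = {v. same_scc E W u v}"
  proof (rule set_eqI, rule iffI)
    fix v assume "v \<in> connected_set g E W C"
    then obtain w where uw: "same_scc E1 W1 u w" and wv: "same_scc E W w v"
      using g u by (auto simp: connected_set_def connects_def)
    have "same_scc E W u w" using uw assms(3,4) by (rule same_scc_mono)
    then show "v \<in> {v. same_scc E W u v}" using same_scc_trans[OF _ wv] by blast
  next
    fix v assume "v \<in> {v. same_scc E W u v}"
    moreover have "u \<in> C" using u same_scc_refl by fastforce
    ultimately show "v \<in> connected_set g E W C" using g by (auto simp: connected_set_def connects_def)
  qed
  then show ?thesis using u assms(4) by (auto simp: is_scc_def)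
qed

lemma is_pos_connected_set:
  assumes "E1 \<subseteq> E" "finite V1" and pos: "is_pos g V1 E1 X1 R1"
    and "set X \<subseteq> V" and W: "V1 - set X1 \<subseteq> V - set X"
  shows "is_pos g V E X (connected_set g E (V - set X) R1)"
proof -
  let ?C = "connected_set g E (V - set X) R1"
  have R1: "R1 \<subseteq> V1 - set X1" using pos by (simp add: is_pos_def)
  have base: "set X \<subseteq> V \<and> ?C \<subseteq> V - set X"
    using assms(4) connected_set_subset[of g E "V - set X" R1] by simp
  show ?thesis
  proof (cases g)
    case GI
    with base show ?thesis by (simp add: is_pos_def succ_closed_connected_set)
  next
    case GISC
    with base show ?thesis by (simp add: is_pos_def same_scc_closed_connected_set)
  next
    case GV
    have "?C = {} \<or> (\<exists>!C. initial_comp E ?C C)"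
    proof (cases "R1 = {}")
      case False
      have "finite R1" using R1 assms(2) finite_subset by blast
      moreover have "\<exists>!C. initial_comp E1 R1 C" using pos False GV by (simp add: is_pos_def)
      moreover have "R1 \<subseteq> V - set X" using R1 W by blast
      ultimately show ?thesis
        using GV assms(1) False unique_initial_comp_connected_set[of g E1 E R1] by simp
    qed simp
    with base GV show ?thesis by (simp add: is_pos_def succ_closed_connected_set)
  next
    case GVSC
    then have "R1 = {} \<or> is_scc E1 (V1 - set X1) R1" using pos by (simp add: is_pos_def)
    then have "?C = {} \<or> is_scc E (V - set X) ?C"
      using GVSC assms(1) W scc_connected_set[of g E1 "V1 - set X1" R1 E "V - set X"] by auto
    with base GVSC show ?thesis by (simp add: is_pos_def)
  qed
qed

lemma is_succ_special_iff:
  "special g V E X R \<Longrightarrow> is_succ g V E (X, R) (X', R') \<longleftrightarrow> X' = [] \<and> is_pos g V E [] R'"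
  by (simp add: is_succ_def)

lemma is_succ_nonspecial_iff:
  "\<not> special g V E X R \<Longrightarrow> is_succ g V E (X, R) (X', R') \<longleftrightarrow>
     is_pos g V E X' R' \<and> searcher_step X X' \<and>
     (\<forall>v'\<in>R'. \<exists>v\<in>R. connects g E (V - (set X \<inter> set X')) v v')"
  by (simp add: is_succ_def searcher_step_def connects_def)

lemma is_succ_is_pos: "is_succ g V E p (X', R') \<Longrightarrow> is_pos g V E X' R'"
  by (cases p) (auto simp: is_succ_def split: if_splits)

lemma is_succ_admissible: "is_succ g V E p (X', R') \<Longrightarrow> admissible g V E X' R'"
  by (simp add: admissible_def is_succ_is_pos)

lemma is_succ_from_empty: "is_succ g V E (X, {}) (X', R') \<Longrightarrow> R' = {}"
  using special_start[of g V E X "{}"] by (cases "special g V E X {}") (auto simp: is_succ_nonspecial_iff)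

lemma is_succ_connected_set:
  assumes "\<not> special g V E X R" "searcher_step X X'"
    and "is_pos g V E X' (connected_set g E (V - set X') R')"
    and from_R: "\<forall>u\<in>R'. \<exists>w\<in>R. connects g E (V - (set X \<inter> set X')) w u"
  shows "is_succ g V E (X, R) (X', connected_set g E (V - set X') R')"
  unfolding is_succ_nonspecial_iff[OF assms(1)]
proof (intro conjI ballI assms(2,3))
  fix v assume "v \<in> connected_set g E (V - set X') R'"
  then obtain u where u: "u \<in> R'" "connects g E (V - (set X \<inter> set X')) u v"
    using connected_set_connects[of v g E "V - set X'" R' R' E "V - (set X \<inter> set X')"] by blast
  obtain w where "w \<in> R" "connects g E (V - (set X \<inter> set X')) w u" using from_R u(1) by blast
  then show "\<exists>w\<in>R. connects g E (V - (set X \<inter> set X')) w v" using connects_trans[OF _ u(2)] by blast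
qed

section \<open>Searches consistent with a bounded winning strategy\<close>

lemma search_admissible:
  assumes "cons_search g V E \<sigma> s N" "enat i < N"
  shows "admissible g V E (fst (s i)) (snd (s i))"
  using assms(2)
proof (induction i)
  case 0
  then show ?case using assms(1) admissible_start by (simp add: cons_search_def)
next
  case (Suc i)
  then have "is_succ g V E (s i) (s (Suc i))" using assms(1) by (simp add: cons_search_def)
  then show ?case using is_succ_admissible by (metis prod.collapse)
qed

lemma cons_search_snoc:
  assumes "cons_search g V E \<sigma> s (enat (Suc n))"
    and "is_succ g V E (s n) L" "fst L = \<sigma> (s n)"
  shows "cons_search g V E \<sigma> (s(Suc n := L)) (enat (Suc (Suc n)))"
  using assms by (auto simp: cons_search_def less_Suc_eq one_enat_def)

lemma cons_search_append_play:
  assumes "cons_search g V E \<sigma> s (enat (Suc n))" "f 0 = s n"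
    and "\<And>j. is_succ g V E (f j) (f (Suc j)) \<and> fst (f (Suc j)) = \<sigma> (f j)"
  shows "cons_search g V E \<sigma> (\<lambda>i. if i \<le> n then s i else f (i - n)) \<infinity>"
  unfolding cons_search_def
proof (intro conjI allI impI)
  let ?t = "\<lambda>i. if i \<le> n then s i else f (i - n)"
  show "(1::enat) \<le> \<infinity>" by simp
  show "?t 0 = ([], V)" using assms(1) by (simp add: cons_search_def)
  fix i
  have "is_succ g V E (?t i) (?t (Suc i)) \<and> fst (?t (Suc i)) = \<sigma> (?t i)"
  proof (cases "Suc i \<le> n")
    case True
    then show ?thesis using assms(1) by (simp add: cons_search_def)
  next
    case False
    then have "?t i = f (i - n)" "?t (Suc i) = f (Suc (i - n))"
      using assms(2) by (auto simp: Suc_diff_le not_less_eq_eq le_Suc_eq)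
    then show ?thesis using assms(3) by simp
  qed
  then show "is_succ g V E (?t i) (?t (Suc i))" "fst (?t (Suc i)) = \<sigma> (?t i)" by auto
qed

locale bounded_winning_strategy =
  fixes g :: gvar and V :: "'a set" and E :: "('a \<times> 'a) set"
    and \<sigma> :: "'a list \<times> 'a set \<Rightarrow> 'a list" and k :: nat
  assumes finite_V: "finite V" and V_nonempty: "V \<noteq> {}"
    and strategy: "strategy g V E \<sigma>"
    and winning: "all_complete g V E \<sigma> winning_search"
    and bounded: "all_complete g V E \<sigma> (bounded_search k)"
begin

definition play_step :: "'a list \<times> 'a set \<Rightarrow> 'a list \<times> 'a set \<Rightarrow> bool" where
  "play_step L L' \<longleftrightarrow> is_succ g V E L L' \<and> fst L' = \<sigma> L"

inductive reachable :: "'a list \<times> 'a set \<Rightarrow> bool" where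
  start: "reachable ([], V)"
| step: "reachable L \<Longrightarrow> play_step L L' \<Longrightarrow> reachable L'"

lemma reachable_admissible: "reachable L \<Longrightarrow> admissible g V E (fst L) (snd L)"
  by (induction rule: reachable.induct)
    (auto simp: admissible_start play_step_def intro: is_succ_admissible)

lemma strategy_move: "admissible g V E X R \<Longrightarrow> \<exists>R'. is_succ g V E (X, R) (\<sigma> (X, R), R')"
  using strategy by (simp add: strategy_def)

definition some_move :: "'a list \<times> 'a set \<Rightarrow> 'a list \<times> 'a set" where
  "some_move L = (\<sigma> L, SOME R. is_succ g V E L (\<sigma> L, R))"

lemma play_step_some_move:
  assumes "admissible g V E (fst L) (snd L)"
  shows "play_step L (some_move L)"
proof -
  have "\<exists>R. is_succ g V E L (\<sigma> L, R)" using strategy_move assms by (cases L) simp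
  then show ?thesis unfolding play_step_def some_move_def using someI_ex by simp
qed

lemma reachable_on_search:
  "reachable L \<Longrightarrow> \<exists>s n. cons_search g V E \<sigma> s (enat (Suc n)) \<and> s n = L"
proof (induction rule: reachable.induct)
  case start
  have "cons_search g V E \<sigma> (\<lambda>_. ([], V)) (enat (Suc 0))"
    by (simp add: cons_search_def one_enat_def)
  then show ?case by blast
next
  case (step L L')
  then obtain s n where s: "cons_search g V E \<sigma> s (enat (Suc n))" "s n = L" by blast
  then have "cons_search g V E \<sigma> (s(Suc n := L')) (enat (Suc (Suc n)))"
    using cons_search_snoc[OF s(1)] step.hyps(2) by (simp add: play_step_def)
  moreover have "(s(Suc n := L')) (Suc n) = L'" by simp
  ultimately show ?case by blast
qed

text \<open>Infinite searches are complete, so whatever the strategy guarantees for complete searches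
  holds at every step from a reachable position.\<close>
lemma play_step_on_infinite_search:
  assumes "reachable L" "play_step L L'"
  shows "\<exists>t n. cons_search g V E \<sigma> t \<infinity> \<and> t n = L \<and> t (Suc n) = L'"
proof -
  obtain s n where s: "cons_search g V E \<sigma> s (enat (Suc n))" "s n = L"
    using reachable_on_search assms(1) by blast
  define f where "f j = (if j = 0 then L else (some_move ^^ (j - 1)) L')" for j
  have step: "play_step (f j) (f (Suc j))" if "reachable (f j)" for j
    using assms(2) play_step_some_move[OF reachable_admissible[OF that]] by (cases j) (auto simp: f_def)
  have "reachable (f j)" for j
    by (induction j) (auto simp: assms(1) f_def[of 0] intro: reachable.step step)
  then have "play_step (f j) (f (Suc j))" for j by (rule step)
  then have "cons_search g V E \<sigma> (\<lambda>i. if i \<le> n then s i else f (i - n)) \<infinity>"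
    using s by (intro cons_search_append_play) (auto simp: f_def play_step_def)
  then show ?thesis using s by (intro exI[of _ "\<lambda>i. if i \<le> n then s i else f (i - n)"] exI[of _ n])
    (simp add: f_def)
qed

lemma reachable_length:
  assumes "reachable L"
  shows "length (fst L) \<le> k"
proof -
  have "play_step L (some_move L)" using assms reachable_admissible play_step_some_move by blast
  then obtain t n where t: "cons_search g V E \<sigma> t \<infinity>" "t n = L"
    using play_step_on_infinite_search assms by blast
  then have "bounded_search k t \<infinity>" using bounded by (simp add: all_complete_def complete_def)
  then show ?thesis using t(2) by (auto simp: bounded_search_def)
qed

lemma reachable_monotone:
  assumes "all_complete g V E \<sigma> monotone_search" "reachable L" "play_step L L'"
  shows "snd L' \<subseteq> snd L"
proof -
  obtain t n where "cons_search g V E \<sigma> t \<infinity>" "t n = L" "t (Suc n) = L'"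
    using play_step_on_infinite_search assms(2,3) by blast
  then show ?thesis using assms(1) by (fastforce simp: all_complete_def complete_def monotone_search_def)
qed

lemma reachable_stationary:
  assumes "all_complete g V E \<sigma> stationary_search" "reachable L" "play_step L L'" "snd L \<noteq> {}"
  shows "prefix (fst L) (fst L')"
proof -
  obtain t n where "cons_search g V E \<sigma> t \<infinity>" "t n = L" "t (Suc n) = L'"
    using play_step_on_infinite_search assms(2,3) by blast
  then show ?thesis
    using assms(1,4) by (fastforce simp: all_complete_def complete_def stationary_search_def)
qed

lemma finite_reachable: "finite {L. reachable L}"
proof (rule finite_subset)
  show "{L. reachable L} \<subseteq> {X. set X \<subseteq> V \<and> length X \<le> k} \<times> Pow V"
    using reachable_length reachable_admissible admissible_subset by fastforce
  show "finite ({X. set X \<subseteq> V \<and> length X \<le> k} \<times> Pow V)"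
    using finite_V finite_lists_length_le by blast
qed

lemma no_infinite_live_play:
  assumes "reachable (f 0)" "\<And>i. snd (f i) \<noteq> {} \<and> play_step (f i) (f (Suc i))"
  shows False
proof -
  obtain s n where s: "cons_search g V E \<sigma> s (enat (Suc n))" "s n = f 0"
    using reachable_on_search assms(1) by blast
  define t where "t i = (if i \<le> n then s i else f (i - n))" for i
  have "cons_search g V E \<sigma> t \<infinity>"
    unfolding t_def using cons_search_append_play[where f = f, OF s(1) s(2)[symmetric]] assms(2)
    by (simp add: play_step_def)
  moreover from this have "winning_search t \<infinity>"
    using winning by (simp add: all_complete_def complete_def)
  then obtain i where i: "snd (t i) = {}" by (auto simp: winning_search_def)
  ultimately have "snd (t (i + j)) = {}" for j
  proof (induction j)
    case (Suc j)
    have "is_succ g V E (t (i + j)) (t (Suc (i + j)))" using Suc.prems by (simp add: cons_search_def)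
    with Suc.IH Suc.prems show ?case using is_succ_from_empty by (metis add_Suc_right prod.collapse)
  qed simp
  from this[of "n + 1"] have "snd (f (i + 1)) = {}" by (simp add: t_def)
  then show False using assms(2) by blast
qed

definition live_step :: "(('a list \<times> 'a set) \<times> ('a list \<times> 'a set)) set" where
  "live_step = {(L, L'). reachable L \<and> snd L \<noteq> {} \<and> play_step L L'}"

lemma wf_live_step: "wf (live_step\<inverse>)"
  unfolding wf_iff_no_infinite_down_chain
  using no_infinite_live_play by (fastforce simp: live_step_def)

lemma live_step_reachable: "(L, L') \<in> live_step\<^sup>+ \<Longrightarrow> reachable L'"
  by (induction rule: trancl_induct) (auto simp: live_step_def intro: reachable.step)

text \<open>Finitely many positions are reachable and live play is acyclic, so the number of positions
  reachable by live play is a height that strictly decreases along live steps.\<close>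
definition height :: "'a list \<times> 'a set \<Rightarrow> nat" where
  "height L = card {L'. (L, L') \<in> live_step\<^sup>+}"

lemma height_decreasing:
  assumes "reachable L" "snd L \<noteq> {}" "play_step L L'"
  shows "height L' < height L"
proof -
  have LL': "(L, L') \<in> live_step" using assms by (simp add: live_step_def)
  have "{M. (L', M) \<in> live_step\<^sup>+} \<subseteq> {M. (L, M) \<in> live_step\<^sup>+}"
    using trancl_into_trancl2[OF LL'] by blast
  moreover have "L' \<in> {M. (L, M) \<in> live_step\<^sup>+}" using LL' by blast
  moreover have "acyclic live_step" using wf_acyclic[OF wf_live_step] by (simp add: acyclic_converse)
  then have "L' \<notin> {M. (L', M) \<in> live_step\<^sup>+}" unfolding acyclic_def by blast
  moreover have "finite {M. (L, M) \<in> live_step\<^sup>+}"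
    using finite_reachable by (rule rev_finite_subset) (auto dest: live_step_reachable)
  ultimately show ?thesis unfolding height_def by (metis psubsetI psubset_card_mono)
qed

text \<open>From the start the searchers must eventually place a searcher, possibly after the
  robber's initial choice in the special starting position.\<close>
lemma one_le_searchers: "1 \<le> k"
proof -
  let ?L0 = "([], V) :: 'a list \<times> 'a set"
  have start: "play_step ?L0 (some_move ?L0)"
    using play_step_some_move[of ?L0] admissible_start[of g V E] by simp
  have "\<exists>L. reachable L \<and> fst L \<noteq> []"
  proof (cases "\<sigma> ?L0 = []")
    case False
    then show ?thesis
      using reachable.step[OF reachable.start start] by (auto simp: some_move_def)
  next
    case True
    have "special g V E [] V"
    proof (rule ccontr)
      assume "\<not> special g V E [] V"
      then have "searcher_step [] (\<sigma> ?L0)"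
        using start by (simp add: play_step_def some_move_def is_succ_nonspecial_iff)
      with True show False using searcher_step_Nil by blast
    qed
    then have "play_step ?L0 ([], {})"
      using True is_pos_empty[of "[]" V g E] by (simp add: play_step_def is_succ_special_iff)
    with reachable.start have r: "reachable ([], {})" by (rule reachable.step)
    have "\<not> special g V E [] {}" using V_nonempty by (simp add: special_def)
    moreover have step: "play_step ([], {}) (some_move ([], {}))"
      using play_step_some_move reachable_admissible[OF r] by simp
    ultimately have "searcher_step [] (\<sigma> ([], {}))"
      by (simp add: play_step_def some_move_def is_succ_nonspecial_iff)
    then show ?thesis
      using reachable.step[OF r step] searcher_step_Nil by (auto simp: some_move_def)
  qed
  then obtain L where "reachable L" "fst L \<noteq> []" by blast
  then show ?thesis using reachable_length[of L] by (cases "fst L") auto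
qed

end

section \<open>Restricting a strategy to a subgraph\<close>

locale restriction = bounded_winning_strategy g V E \<sigma> k for g V E \<sigma> k +
  fixes V' :: "'a set" and E' :: "('a \<times> 'a) set"
  assumes subgraph: "subgraph V' E' V E"
begin

lemma V'_subset: "V' \<subseteq> V" and E'_subset: "E' \<subseteq> E"
  and finite_V': "finite V'" and V'_nonempty: "V' \<noteq> {}"
  using subgraph by (auto simp: subgraph_def digraph_def)

definition is_lift :: "'a list \<times> 'a set \<Rightarrow> 'a list \<times> 'a set \<Rightarrow> bool" where
  "is_lift L p \<longleftrightarrow> reachable L \<and> first_visits V' (fst L) = fst p \<and> snd p \<subseteq> snd L"

definition visible_move :: "'a list \<times> 'a set \<Rightarrow> bool" where
  "visible_move L \<longleftrightarrow> set (\<sigma> L) \<inter> V' \<noteq> set (fst L) \<inter> V'"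

lemma is_lift_start: "R' \<subseteq> V' \<Longrightarrow> is_lift ([], V) ([], R')"
  using V'_subset by (auto simp: is_lift_def first_visits_def intro: reachable.start)

lemma invisible_move:
  assumes "reachable (X, R)" and invisible: "\<not> (visible_move (X, R) \<and> \<not> special g V E X R)"
  shows "first_visits V' (\<sigma> (X, R)) = first_visits V' X" and "set (\<sigma> (X, R)) \<subseteq> V"
proof -
  obtain R0 where R0: "is_succ g V E (X, R) (\<sigma> (X, R), R0)"
    using strategy_move reachable_admissible[OF assms(1)] by auto
  have "first_visits V' (\<sigma> (X, R)) = first_visits V' X \<and> set (\<sigma> (X, R)) \<subseteq> V"
  proof (cases "special g V E X R")
    case True
    then show ?thesis using R0 special_start[OF True] by (simp add: is_succ_special_iff)
  next
    case False
    then have "searcher_step X (\<sigma> (X, R))" "is_pos g V E (\<sigma> (X, R)) R0"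
      using R0 by (simp_all add: is_succ_nonspecial_iff)
    moreover have "set (\<sigma> (X, R)) \<inter> V' = set X \<inter> V'"
      using invisible False by (simp add: visible_move_def)
    ultimately show ?thesis
      using first_visits_searcher_step[of X "\<sigma> (X, R)" V'] is_pos_subset[of g V E "\<sigma> (X, R)" R0]
      by auto
  qed
  then show "first_visits V' (\<sigma> (X, R)) = first_visits V' X" "set (\<sigma> (X, R)) \<subseteq> V" by simp_all
qed

text \<open>A robber confined to G' does not notice searcher moves outside G'; she answers them by
  keeping the whole closure of her space.\<close>
lemma invisible_play_step:
  assumes pos: "is_pos g V' E' X' R'" and lift: "is_lift (X, R) (X', R')"
    and invisible: "\<not> (visible_move (X, R) \<and> \<not> special g V E X R)"
  defines "Rn \<equiv> connected_set g E (V - set (\<sigma> (X, R))) R'"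
  shows "play_step (X, R) (\<sigma> (X, R), Rn)" and "is_lift (\<sigma> (X, R), Rn) (X', R')"
proof -
  let ?Xn = "\<sigma> (X, R)"
  have reach: "reachable (X, R)" and X': "first_visits V' X = X'" and R'R: "R' \<subseteq> R"
    using lift by (auto simp: is_lift_def)
  note Xn = invisible_move[OF reach invisible]
  have R'_free: "R' \<subseteq> V' - set X'" using pos by (simp add: is_pos_def)
  have "set ?Xn \<inter> V' = set X'" using Xn(1) X' set_first_visits by metis
  then have W: "V' - set X' \<subseteq> V - set ?Xn" using V'_subset by blast
  have pos_n: "is_pos g V E ?Xn Rn"
    unfolding Rn_def using is_pos_connected_set[OF E'_subset finite_V' pos Xn(2) W] .
  obtain R0 where R0: "is_succ g V E (X, R) (?Xn, R0)"
    using strategy_move reachable_admissible[OF reach] by auto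
  have X'_set: "set X' = set X \<inter> V'" using X' by auto
  show step: "play_step (X, R) (?Xn, Rn)"
  proof (cases "special g V E X R")
    case True
    then show ?thesis using R0 pos_n by (simp add: play_step_def is_succ_special_iff)
  next
    case False
    then have "searcher_step X ?Xn" using R0 by (simp add: is_succ_nonspecial_iff)
    moreover have "\<forall>u\<in>R'. \<exists>w\<in>R. connects g E (V - (set X \<inter> set ?Xn)) w u"
    proof
      fix u assume "u \<in> R'"
      then have "u \<in> R" "u \<in> V - (set X \<inter> set ?Xn)" using R'_free R'R V'_subset X'_set by auto
      then show "\<exists>w\<in>R. connects g E (V - (set X \<inter> set ?Xn)) w u" by (blast intro: connects_refl)
    qed
    ultimately show ?thesis
      using is_succ_connected_set[OF False _ pos_n[unfolded Rn_def]] unfolding Rn_def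
      by (simp add: play_step_def)
  qed
  have "R' \<subseteq> Rn" unfolding Rn_def using R'_free W by (intro subset_connected_set) blast
  then show "is_lift (?Xn, Rn) (X', R')"
    using reachable.step[OF reach step] Xn(1) X' by (simp add: is_lift_def)
qed

text \<open>Invisible moves decrease the height, so a lift that is about to make a visible move exists.\<close>
lemma visible_lift_exists:
  assumes pos: "is_pos g V' E' X' R'" and ne: "R' \<noteq> {}"
  shows "is_lift L (X', R') \<Longrightarrow> \<exists>L1. is_lift L1 (X', R') \<and> height L1 \<le> height L \<and>
           visible_move L1 \<and> \<not> special g V E (fst L1) (snd L1)"
proof (induction "height L" arbitrary: L rule: less_induct)
  case less
  obtain X R where L: "L = (X, R)" by (cases L)
  show ?case
  proof (cases "visible_move L \<and> \<not> special g V E X R")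
    case True
    then show ?thesis using less.prems L by (intro exI[of _ L]) simp
  next
    case False
    let ?L2 = "(\<sigma> L, connected_set g E (V - set (\<sigma> L)) R')"
    have step: "play_step L ?L2" and lift: "is_lift ?L2 (X', R')"
      using invisible_play_step[OF pos] less.prems False L by simp_all
    have "R \<noteq> {}" using less.prems ne L by (auto simp: is_lift_def)
    then have "height ?L2 < height L"
      using height_decreasing[OF _ _ step] less.prems L by (simp add: is_lift_def)
    with less.hyps[OF this lift] show ?thesis by (meson less_imp_le order_trans)
  qed
qed

end

text \<open>One round of the simulation: the lift (X1, R1) of the G'-position (X', R') is about to make
  a move that changes the searchers on G'.\<close>
locale simulation_round = restriction g V E \<sigma> k V' E' for g V E \<sigma> k V' E' +
  fixes X' R' X1 R1
  assumes pos: "is_pos g V' E' X' R'" and R'_nonempty: "R' \<noteq> {}"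
    and lift: "is_lift (X1, R1) (X', R')" and visible: "visible_move (X1, R1)"
    and nonspecial: "\<not> special g V E X1 R1"
begin

abbreviation "Xn \<equiv> \<sigma> (X1, R1)"
abbreviation "X'n \<equiv> first_visits V' Xn"

lemma reachable_lift: "reachable (X1, R1)" and first_visits_X1: "first_visits V' X1 = X'"
  and R'_subset_R1: "R' \<subseteq> R1"
  using lift by (auto simp: is_lift_def)

lemma pos_nonspecial: "\<not> special g V' E' X' R'"
  using pos by (rule is_pos_not_special)

lemma move: "searcher_step X1 Xn" and move_in_V: "set Xn \<subseteq> V"
proof -
  obtain R0 where "is_succ g V E (X1, R1) (Xn, R0)"
    using strategy_move reachable_admissible[OF reachable_lift] by auto
  then have "searcher_step X1 Xn \<and> is_pos g V E Xn R0"
    using nonspecial by (simp add: is_succ_nonspecial_iff)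
  then show "searcher_step X1 Xn" "set Xn \<subseteq> V" using is_pos_subset by blast+
qed

lemma projected_move: "searcher_step X' X'n"
  using first_visits_searcher_step[OF move, of V'] visible first_visits_X1
  by (simp add: visible_move_def)

lemma projected_move_legal: "is_succ g V' E' (X', R') (X'n, {})"
  using projected_move is_pos_empty[of X'n V' g E']
  by (simp add: is_succ_nonspecial_iff[OF pos_nonspecial])

lemma response_lift:
  assumes "is_succ g V' E' (X', R') (X'n, R'n)"
  defines "Rn \<equiv> connected_set g E (V - set Xn) R'n"
  shows "is_lift (Xn, Rn) (X'n, R'n)" and "height (Xn, Rn) < height (X1, R1)"
proof -
  have pos_n: "is_pos g V' E' X'n R'n" and
    from_R': "\<forall>v'\<in>R'n. \<exists>v\<in>R'. connects g E' (V' - (set X' \<inter> set X'n)) v v'"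
    using assms(1) by (simp_all add: is_succ_nonspecial_iff[OF pos_nonspecial])
  have W: "V' - set X'n \<subseteq> V - set Xn" using V'_subset by auto
  have pos_G: "is_pos g V E Xn Rn"
    unfolding Rn_def using is_pos_connected_set[OF E'_subset finite_V' pos_n move_in_V W] .
  have W': "V' - (set X' \<inter> set X'n) \<subseteq> V - (set X1 \<inter> set Xn)"
    using V'_subset first_visits_X1 by auto
  have "\<forall>u\<in>R'n. \<exists>w\<in>R1. connects g E (V - (set X1 \<inter> set Xn)) w u"
  proof
    fix u assume "u \<in> R'n"
    then obtain w where "w \<in> R'" "connects g E' (V' - (set X' \<inter> set X'n)) w u" using from_R' by blast
    then show "\<exists>w\<in>R1. connects g E (V - (set X1 \<inter> set Xn)) w u"
      using R'_subset_R1 connects_mono[OF _ E'_subset W'] by blast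
  qed
  then have "play_step (X1, R1) (Xn, Rn)"
    unfolding Rn_def using is_succ_connected_set[OF nonspecial move pos_G[unfolded Rn_def]]
    by (simp add: play_step_def)
  moreover have "R'n \<subseteq> Rn"
    unfolding Rn_def using pos_n W is_pos_subset by (intro subset_connected_set) blast
  ultimately show "is_lift (Xn, Rn) (X'n, R'n)"
    using reachable.step[OF reachable_lift] by (simp add: is_lift_def)
  show "height (Xn, Rn) < height (X1, R1)"
    using height_decreasing[OF reachable_lift _ \<open>play_step (X1, R1) (Xn, Rn)\<close>] R'_subset_R1
      R'_nonempty by auto
qed

lemma move_stationary:
  assumes "all_complete g V E \<sigma> stationary_search"
  shows "prefix X' X'n"
proof -
  have step: "play_step (X1, R1) (some_move (X1, R1))"
    using play_step_some_move reachable_admissible[OF reachable_lift] by simp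
  have "R1 \<noteq> {}" using R'_subset_R1 R'_nonempty by blast
  with reachable_stationary[OF assms reachable_lift step] have "prefix X1 Xn"
    by (simp add: some_move_def)
  then show ?thesis using prefix_first_visits first_visits_X1 by metis
qed

lemma removal_in_G:
  assumes "a \<notin> set X'n" "set X' = insert a (set X'n)"
  shows "a \<in> set X1" and "set Xn \<subseteq> set X1"
proof -
  have "set X' = set X1 \<inter> V'" using first_visits_X1 by auto
  then show a: "a \<in> set X1" using assms(2) by auto
  have "a \<notin> set Xn" using assms a \<open>set X' = set X1 \<inter> V'\<close> by auto
  then show "set Xn \<subseteq> set X1" using move a by (auto simp: searcher_step_iff)
qed

text \<open>If a searcher leaves the vertex a of G', the corresponding move in G also removes a searcher
  from a, and a monotone strategy in G keeps a out of reach of the robber.\<close>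
lemma removed_vertex_unreachable:
  assumes mono: "all_complete g V E \<sigma> monotone_search"
    and remove: "a \<notin> set X'n" "set X' = insert a (set X'n)"
  shows "a \<notin> connected_set g E (V - set Xn) R1"
proof
  let ?C = "connected_set g E (V - set Xn) R1"
  assume a_C: "a \<in> ?C"
  have pos1: "is_pos g V E X1 R1"
    using reachable_admissible[OF reachable_lift] nonspecial by (simp add: admissible_def)
  then have R1_free: "R1 \<subseteq> V - set X1" by (simp add: is_pos_def)
  have "V - set X1 \<subseteq> V - set Xn" using removal_in_G(2)[OF remove] by blast
  then have "is_pos g V E Xn ?C"
    using is_pos_connected_set[OF order_refl finite_V pos1 move_in_V] by blast
  moreover have "\<forall>u\<in>R1. \<exists>w\<in>R1. connects g E (V - (set X1 \<inter> set Xn)) w u"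
  proof
    fix u assume "u \<in> R1"
    moreover from this have "u \<in> V - (set X1 \<inter> set Xn)" using R1_free by blast
    ultimately show "\<exists>w\<in>R1. connects g E (V - (set X1 \<inter> set Xn)) w u"
      by (blast intro: connects_refl)
  qed
  ultimately have "play_step (X1, R1) (Xn, ?C)"
    using is_succ_connected_set[OF nonspecial move] by (simp add: play_step_def)
  from reachable_monotone[OF mono reachable_lift this] have "?C \<subseteq> R1" by simp
  then show False using a_C R1_free removal_in_G(1)[OF remove] by blast
qed

text \<open>A new robber vertex in G' after the removal of a searcher from a would be reached
  through a.\<close>
lemma response_monotone:
  assumes mono: "all_complete g V E \<sigma> monotone_search"
    and succ: "is_succ g V' E' (X', R') (X'n, R'n)"
  shows "R'n \<subseteq> R'"
proof
  fix v' assume "v' \<in> R'n"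
  then obtain v where v: "v \<in> R'" "connects g E' (V' - (set X' \<inter> set X'n)) v v'"
    using succ by (auto simp: is_succ_nonspecial_iff[OF pos_nonspecial])
  from projected_move consider
      (place) a where "a \<notin> set X'" "set X'n = insert a (set X')"
    | (remove) a where "a \<notin> set X'n" "set X' = insert a (set X'n)"
    unfolding searcher_step_iff by blast
  then show "v' \<in> R'"
  proof cases
    case place
    then have "set X' \<inter> set X'n = set X'" by auto
    then show ?thesis using connects_closed[OF pos v(1)] v(2) by simp
  next
    case remove
    then have meet: "set X' \<inter> set X'n = set X'n" by auto
    show ?thesis
    proof (rule ccontr)
      assume "v' \<notin> R'"
      then have "\<not> connects g E' (V' - set X') v v'" using connects_closed[OF pos v(1)] by blast
      moreover have "V' - set X' = V' - set X'n - {a}" using remove by auto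
      ultimately have "connects g E' (V' - set X'n) v a"
        using connects_through v(2) meet by metis
      moreover have "V' - set X'n \<subseteq> V - set Xn" using V'_subset by auto
      ultimately have "connects g E (V - set Xn) v a" by (rule connects_mono[OF _ E'_subset])
      then have "a \<in> connected_set g E (V - set Xn) R1"
        using v(1) R'_subset_R1 by (auto simp: connected_set_def)
      with removed_vertex_unreachable[OF mono remove] show False by blast
    qed
  qed
qed

end

context restriction
begin

definition visible_lift :: "'a list \<times> 'a set \<Rightarrow> 'a list \<times> 'a set" where
  "visible_lift p =
     arg_min height (\<lambda>L. is_lift L p \<and> visible_move L \<and> \<not> special g V E (fst L) (snd L))"

lemma visible_lift:
  assumes pos: "is_pos g V' E' X' R'" and ne: "R' \<noteq> {}" and lift: "is_lift L (X', R')"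
  shows "simulation_round g V E \<sigma> k V' E' X' R' (fst (visible_lift (X', R'))) (snd (visible_lift (X', R')))"
    and "height (visible_lift (X', R')) \<le> height L"
proof -
  let ?P = "\<lambda>L. is_lift L (X', R') \<and> visible_move L \<and> \<not> special g V E (fst L) (snd L)"
  obtain L1 where L1: "?P L1" "height L1 \<le> height L"
    using visible_lift_exists[OF pos ne lift] by blast
  have "?P (visible_lift (X', R'))"
    unfolding visible_lift_def by (rule arg_min_natI[of ?P, OF L1(1)])
  then show "simulation_round g V E \<sigma> k V' E' X' R' (fst (visible_lift (X', R'))) (snd (visible_lift (X', R')))"
    using pos ne by unfold_locales simp_all
  have "height (visible_lift (X', R')) \<le> height L1"
    unfolding visible_lift_def by (rule arg_min_nat_le[of ?P, OF L1(1)])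
  with L1(2) show "height (visible_lift (X', R')) \<le> height L" by simp
qed

text \<open>The searchers' move once the robber is caught (or in positions that never occur): remove a
  searcher, or place one if there is none.\<close>
definition retreat :: "'a list \<Rightarrow> 'a list" where
  "retreat X = (if X = [] then [SOME v. v \<in> V'] else take (SOME n. searcher_step X (take n X)) X)"

lemma retreat:
  assumes "set X \<subseteq> V'"
  shows "searcher_step X (retreat X) \<and> set (retreat X) \<subseteq> V' \<and> length (retreat X) \<le> max 1 (length X)"
proof (cases "X = []")
  case True
  have "(SOME v. v \<in> V') \<in> V'" using V'_nonempty some_in_eq by blast
  then show ?thesis using True by (simp add: retreat_def searcher_step_def)
next
  case False
  then have "searcher_step X (retreat X)"
    using someI_ex[OF searcher_step_take[OF False]] by (simp add: retreat_def)
  moreover have "prefix (retreat X) X" using False by (simp add: retreat_def take_is_prefix)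
  ultimately show ?thesis using assms by (auto dest: set_mono_prefix prefix_length_le)
qed

definition restricted_strategy :: "'a list \<times> 'a set \<Rightarrow> 'a list" where
  "restricted_strategy p =
     (if special g V' E' (fst p) (snd p) then []
      else if snd p \<noteq> {} \<and> (\<exists>L. is_lift L p) then first_visits V' (\<sigma> (visible_lift p))
      else retreat (fst p))"

lemma restricted_strategy_simulates:
  assumes "is_pos g V' E' X' R'" "R' \<noteq> {}" "is_lift L (X', R')"
  shows "restricted_strategy (X', R') = first_visits V' (\<sigma> (visible_lift (X', R')))"
proof -
  have "\<exists>L. is_lift L (X', R')" using assms(3) by blast
  then show ?thesis using assms(2) is_pos_not_special[OF assms(1)]
    by (simp add: restricted_strategy_def)
qed

lemma strategy_restricted_strategy: "strategy g V' E' restricted_strategy"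
  unfolding strategy_def
proof (intro allI impI)
  fix X' R' assume adm: "admissible g V' E' X' R'"
  show "\<exists>R'n. is_succ g V' E' (X', R') (restricted_strategy (X', R'), R'n)"
  proof (cases "special g V' E' X' R'")
    case True
    then have "is_succ g V' E' (X', R') (restricted_strategy (X', R'), {})"
      using is_pos_empty[of "[]" V' g E'] by (simp add: restricted_strategy_def is_succ_special_iff)
    then show ?thesis by blast
  next
    case nonspecial: False
    then have pos: "is_pos g V' E' X' R'" using adm by (simp add: admissible_def)
    show ?thesis
    proof (cases "R' \<noteq> {} \<and> (\<exists>L. is_lift L (X', R'))")
      case True
      then obtain L where "R' \<noteq> {}" "is_lift L (X', R')" by blast
      note round = visible_lift(1)[OF pos this]
      show ?thesis
        using simulation_round.projected_move_legal[OF round]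
          restricted_strategy_simulates[OF pos \<open>R' \<noteq> {}\<close> \<open>is_lift L (X', R')\<close>]
        by auto
    next
      case False
      have "set X' \<subseteq> V'" using pos is_pos_subset by blast
      then have "is_succ g V' E' (X', R') (retreat X', {})"
        using retreat is_pos_empty[of "retreat X'" V' g E'] nonspecial
        by (simp add: is_succ_nonspecial_iff)
      then show ?thesis using nonspecial False by (auto simp: restricted_strategy_def)
    qed
  qed
qed

definition simulated :: "'a list \<times> 'a set \<Rightarrow> bool" where
  "simulated p \<longleftrightarrow> length (fst p) \<le> k \<and> (snd p \<noteq> {} \<longrightarrow> (\<exists>L. is_lift L p))"

lemma simulated_round:
  assumes "admissible g V' E' X' R'" "simulated (X', R')" "\<not> special g V' E' X' R'" "R' \<noteq> {}"
  obtains X1 R1 where "simulation_round g V E \<sigma> k V' E' X' R' X1 R1"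
    and "restricted_strategy (X', R') = first_visits V' (\<sigma> (X1, R1))"
    and "visible_lift (X', R') = (X1, R1)"
proof -
  have pos: "is_pos g V' E' X' R'" using assms(1,3) by (simp add: admissible_def)
  obtain L where L: "is_lift L (X', R')" using assms(2,4) by (auto simp: simulated_def)
  show ?thesis
    using that[OF visible_lift(1)[OF pos assms(4) L]] restricted_strategy_simulates[OF pos assms(4) L]
    by simp
qed

lemma simulated_step:
  assumes adm: "admissible g V' E' X' R'" and sim: "simulated (X', R')"
    and succ: "is_succ g V' E' (X', R') (restricted_strategy (X', R'), R'n)"
  shows "simulated (restricted_strategy (X', R'), R'n)"
proof (cases "special g V' E' X' R'")
  case True
  then have "restricted_strategy (X', R') = []" by (simp add: restricted_strategy_def)
  moreover have "R'n \<subseteq> V'" using succ True by (simp add: is_succ_special_iff is_pos_def)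
  ultimately show ?thesis using is_lift_start by (auto simp: simulated_def)
next
  case nonspecial: False
  show ?thesis
  proof (cases "R' = {}")
    case True
    then have "R'n = {}" using succ is_succ_from_empty by blast
    moreover have "set X' \<subseteq> V'" using adm admissible_subset by blast
    moreover have "length X' \<le> k" using sim by (simp add: simulated_def)
    ultimately show ?thesis
      using retreat one_le_searchers True nonspecial
      by (fastforce simp: simulated_def restricted_strategy_def)
  next
    case False
    obtain X1 R1 where round: "simulation_round g V E \<sigma> k V' E' X' R' X1 R1"
      and strategy_eq: "restricted_strategy (X', R') = first_visits V' (\<sigma> (X1, R1))"
      using simulated_round[OF adm sim nonspecial False] by blast
    interpret simulation_round g V E \<sigma> k V' E' X' R' X1 R1 by (fact round)
    have lift: "is_lift (Xn, connected_set g E (V - set Xn) R'n) (X'n, R'n)"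
      using response_lift(1) succ strategy_eq by simp
    then have "length X'n \<le> k"
      using reachable_length length_first_visits[of V' Xn] by (fastforce simp: is_lift_def)
    with lift show ?thesis using strategy_eq by (auto simp: simulated_def)
  qed
qed

lemma restricted_step_height:
  assumes adm: "admissible g V' E' X' R'" and sim: "simulated (X', R')"
    and nonspecial: "\<not> special g V' E' X' R'" and "R' \<noteq> {}"
    and succ: "is_succ g V' E' (X', R') (restricted_strategy (X', R'), R'n)" and "R'n \<noteq> {}"
  shows "height (visible_lift (restricted_strategy (X', R'), R'n)) < height (visible_lift (X', R'))"
proof -
  obtain X1 R1 where round: "simulation_round g V E \<sigma> k V' E' X' R' X1 R1"
    and strategy_eq: "restricted_strategy (X', R') = first_visits V' (\<sigma> (X1, R1))"
    and lift_eq: "visible_lift (X', R') = (X1, R1)"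
    using simulated_round[OF adm sim nonspecial \<open>R' \<noteq> {}\<close>] by blast
  interpret simulation_round g V E \<sigma> k V' E' X' R' X1 R1 by (fact round)
  let ?Rn = "connected_set g E (V - set Xn) R'n"
  have "is_pos g V' E' X'n R'n" using succ strategy_eq is_succ_is_pos by simp
  moreover have "is_lift (Xn, ?Rn) (X'n, R'n)" and "height (Xn, ?Rn) < height (X1, R1)"
    using response_lift succ strategy_eq by simp_all
  ultimately show ?thesis
    using visible_lift(2)[of X'n R'n] \<open>R'n \<noteq> {}\<close> strategy_eq lift_eq by fastforce
qed

lemma restricted_step_monotone:
  assumes mono: "all_complete g V E \<sigma> monotone_search"
    and adm: "admissible g V' E' X' R'" and sim: "simulated (X', R')"
    and succ: "is_succ g V' E' (X', R') (restricted_strategy (X', R'), R'n)"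
  shows "R'n \<subseteq> R'"
proof (cases "special g V' E' X' R'")
  case True
  then show ?thesis using succ special_start[OF True] by (simp add: is_succ_special_iff is_pos_def)
next
  case nonspecial: False
  show ?thesis
  proof (cases "R' = {}")
    case False
    obtain X1 R1 where round: "simulation_round g V E \<sigma> k V' E' X' R' X1 R1"
      and strategy_eq: "restricted_strategy (X', R') = first_visits V' (\<sigma> (X1, R1))"
      using simulated_round[OF adm sim nonspecial False] by blast
    show ?thesis using simulation_round.response_monotone[OF round mono] succ strategy_eq by simp
  qed (use succ is_succ_from_empty in blast)
qed

lemma restricted_step_stationary:
  assumes stat: "all_complete g V E \<sigma> stationary_search"
    and adm: "admissible g V' E' X' R'" and sim: "simulated (X', R')" and "R' \<noteq> {}"
  shows "prefix X' (restricted_strategy (X', R'))"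
proof (cases "special g V' E' X' R'")
  case True
  then show ?thesis using special_start[OF True] by simp
next
  case nonspecial: False
  obtain X1 R1 where round: "simulation_round g V E \<sigma> k V' E' X' R' X1 R1"
    and strategy_eq: "restricted_strategy (X', R') = first_visits V' (\<sigma> (X1, R1))"
    using simulated_round[OF adm sim nonspecial \<open>R' \<noteq> {}\<close>] by blast
  show ?thesis using simulation_round.move_stationary[OF round stat] strategy_eq by simp
qed

lemma restricted_search_step:
  assumes "cons_search g V' E' restricted_strategy t N" "enat (Suc i) < N"
  shows "admissible g V' E' (fst (t i)) (snd (t i))"
    and "is_succ g V' E' (fst (t i), snd (t i)) (restricted_strategy (fst (t i), snd (t i)), snd (t (Suc i)))"
proof -
  have "enat i < N" using assms(2) Suc_ile_eq order_less_imp_le by blast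
  then show "admissible g V' E' (fst (t i)) (snd (t i))" using search_admissible[OF assms(1)] by blast
  have "is_succ g V' E' (t i) (t (Suc i))" "fst (t (Suc i)) = restricted_strategy (t i)"
    using assms by (simp_all add: cons_search_def)
  then show "is_succ g V' E' (fst (t i), snd (t i)) (restricted_strategy (fst (t i), snd (t i)), snd (t (Suc i)))"
    by (metis prod.collapse)
qed

lemma search_simulated:
  assumes "cons_search g V' E' restricted_strategy t N"
  shows "enat i < N \<Longrightarrow> simulated (t i)"
proof (induction i)
  case 0
  have "is_lift ([], V) ([], V')" by (simp add: is_lift_start)
  then show ?case using assms by (auto simp: cons_search_def simulated_def)
next
  case (Suc i)
  then have "enat i < N" using Suc_ile_eq order_less_imp_le by blast
  then have "simulated (fst (t i), snd (t i))" using Suc.IH by simp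
  from simulated_step[OF restricted_search_step(1)[OF assms Suc.prems] this restricted_search_step(2)[OF assms Suc.prems]]
  have "simulated (restricted_strategy (t i), snd (t (Suc i)))" by simp
  moreover have "t (Suc i) = (restricted_strategy (t i), snd (t (Suc i)))"
    using assms Suc.prems by (simp add: cons_search_def prod_eq_iff)
  ultimately show ?case by simp
qed

lemma bounded_restricted_strategy: "all_complete g V' E' restricted_strategy (bounded_search k)"
  using search_simulated by (auto simp: all_complete_def bounded_search_def simulated_def)

lemma monotone_restricted_strategy:
  assumes "all_complete g V E \<sigma> monotone_search"
  shows "all_complete g V' E' restricted_strategy monotone_search"
  unfolding all_complete_def monotone_search_def
proof (intro allI impI)
  fix t N i assume "cons_search g V' E' restricted_strategy t N \<and> complete t N" "enat (Suc i) < N"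
  then have t: "cons_search g V' E' restricted_strategy t N" and i: "enat (Suc i) < N" by simp_all
  have "enat i < N" using i Suc_ile_eq order_less_imp_le by blast
  then have "simulated (fst (t i), snd (t i))" using search_simulated[OF t] by simp
  then show "snd (t (Suc i)) \<subseteq> snd (t i)"
    using restricted_step_monotone[OF assms restricted_search_step(1)[OF t i] _ restricted_search_step(2)[OF t i]] by simp
qed

lemma stationary_restricted_strategy:
  assumes "all_complete g V E \<sigma> stationary_search"
  shows "all_complete g V' E' restricted_strategy stationary_search"
  unfolding all_complete_def stationary_search_def
proof (intro allI impI)
  fix t N i assume "cons_search g V' E' restricted_strategy t N \<and> complete t N" "enat (Suc i) < N"
    and ne: "snd (t i) \<noteq> {}"
  then have t: "cons_search g V' E' restricted_strategy t N" and i: "enat (Suc i) < N" by simp_all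
  have "enat i < N" using i Suc_ile_eq order_less_imp_le by blast
  then have "simulated (fst (t i), snd (t i))" using search_simulated[OF t] by simp
  then have "prefix (fst (t i)) (restricted_strategy (t i))"
    using restricted_step_stationary[OF assms restricted_search_step(1)[OF t i] _ ne] by simp
  moreover have "fst (t (Suc i)) = restricted_strategy (t i)" using t i by (simp add: cons_search_def)
  ultimately show "prefix (fst (t i)) (fst (t (Suc i)))" by simp
qed

text \<open>Along an infinite search in which the robber is never caught, the heights of the chosen lifts
  would decrease forever.\<close>
lemma winning_restricted_strategy: "all_complete g V' E' restricted_strategy winning_search"
  unfolding all_complete_def
proof (intro allI impI)
  fix t N assume "cons_search g V' E' restricted_strategy t N \<and> complete t N"
  then have t: "cons_search g V' E' restricted_strategy t N" and "complete t N" by simp_all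
  show "winning_search t N"
  proof (rule ccontr)
    assume lost: "\<not> winning_search t N"
    then have N: "N = \<infinity>" using \<open>complete t N\<close> by (auto simp: complete_def winning_search_def)
    have ne: "snd (t i) \<noteq> {}" for i using lost N by (simp add: winning_search_def)
    have decreasing: "height (visible_lift (t (Suc (Suc i)))) < height (visible_lift (t (Suc i)))" for i
    proof -
      let ?p = "t (Suc i)"
      have adm: "admissible g V' E' (fst ?p) (snd ?p)" and succ: "is_succ g V' E' (fst ?p, snd ?p)
          (restricted_strategy (fst ?p, snd ?p), snd (t (Suc (Suc i))))"
        using restricted_search_step[OF t, of "Suc i"] N by simp_all
      have "is_succ g V' E' (t i) ?p" using t N by (simp add: cons_search_def)
      then have "is_pos g V' E' (fst ?p) (snd ?p)" using is_succ_is_pos by (metis prod.collapse)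
      then have "\<not> special g V' E' (fst ?p) (snd ?p)" by (rule is_pos_not_special)
      moreover have "simulated (fst ?p, snd ?p)" using search_simulated[OF t] N by simp
      ultimately have "height (visible_lift (restricted_strategy ?p, snd (t (Suc (Suc i)))))
          < height (visible_lift ?p)"
        using restricted_step_height[OF adm _ _ ne succ ne] by simp
      moreover have "t (Suc (Suc i)) = (restricted_strategy ?p, snd (t (Suc (Suc i))))"
        using t N by (simp add: cons_search_def prod_eq_iff)
      ultimately show ?thesis by simp
    qed
    have "\<forall>f. \<exists>i. \<not> f (Suc i) < (f i :: nat)"
      using wf_less unfolding wf_iff_no_infinite_down_chain by auto
    from this[rule_format, of "\<lambda>i. height (visible_lift (t (Suc i)))"] show False
      using decreasing by simp
  qed
qed

end

lemma restriction_of_strategy: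
  assumes "subgraph V' E' V E" "strategy g V E \<sigma>"
    and "all_complete g V E \<sigma> winning_search" "all_complete g V E \<sigma> (bounded_search k)"
  obtains \<sigma>' where "strategy g V' E' \<sigma>'" "all_complete g V' E' \<sigma>' winning_search"
    "all_complete g V' E' \<sigma>' (bounded_search k)"
    "all_complete g V E \<sigma> monotone_search \<Longrightarrow> all_complete g V' E' \<sigma>' monotone_search"
    "all_complete g V E \<sigma> stationary_search \<Longrightarrow> all_complete g V' E' \<sigma>' stationary_search"
proof -
  interpret restriction g V E \<sigma> k V' E'
    using assms by unfold_locales (auto simp: subgraph_def digraph_def)
  show ?thesis
    using that[OF strategy_restricted_strategy winning_restricted_strategy bounded_restricted_strategy
        monotone_restricted_strategy stationary_restricted_strategy] .
qed

lemma Inf_enat_mono: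
  assumes "\<And>k. P k \<Longrightarrow> Q k"
  shows "Inf {enat k | k. Q k} \<le> Inf {enat k | k. P k}"
  using assms by (intro Inf_superset_mono) blast

theorem proposition1:
  fixes V V' :: "'a set" and E E' :: "('a \<times> 'a) set"
  assumes "subgraph V' E' V E"
  shows "sstat_vsc V' E' \<le> sstat_vsc V E \<and>
         (\<forall>g. lifo g V' E' \<le> lifo g V E \<and> mlifo g V' E' \<le> mlifo g V E)"
proof (intro conjI allI)
  note restrict = restriction_of_strategy[OF assms]
  show "sstat_vsc V' E' \<le> sstat_vsc V E"
    unfolding sstat_vsc_def by (rule Inf_enat_mono) (metis restrict)
  fix g
  show "lifo g V' E' \<le> lifo g V E"
    unfolding lifo_def by (rule Inf_enat_mono) (metis restrict)
  show "mlifo g V' E' \<le> mlifo g V E"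
    unfolding mlifo_def by (rule Inf_enat_mono) (metis restrict)
qed

end
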